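(* Let $n,k$ be positive integers, $m=kn+1$, and let $\Delta$ be a $\Gamma_{m,n}$-semimodule. Suppose $x\in\Delta$ and $x-\alpha n-1\notin\Delta$ for some $\alpha\in\{0,1,\dots,k\}$. Then $x$ is an $m$-generator of $\Delta$.
   Context: $\Gamma_{m,n}=\{am+bn:a,b\in\mathbb{Z}_{\ge0}\}$ for coprime positive $m,n$. A $\Gamma_{m,n}$-semimodule is a subset $\Delta\subset\mathbb{Z}_{\ge0}$ with $\Delta+\Gamma_{m,n}\subset\Delta$. An $m$-generator of $\Delta$ is an element $a\in\Delta$ with $a-m\notin\Delta$. *)

theory Defs
  imports Main
begin

definition Gamma :: "nat \<Rightarrow> nat \<Rightarrow> int set" where
  "Gamma m n = {int (a * m + b * n) | a b :: nat. True}"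

definition semimodule :: "nat \<Rightarrow> nat \<Rightarrow> int set \<Rightarrow> bool" where
  "semimodule m n \<Delta> \<longleftrightarrow> \<Delta> \<subseteq> {z. 0 \<le> z} \<and> (\<forall>d\<in>\<Delta>. \<forall>g\<in>Gamma m n. d + g \<in> \<Delta>)"

definition m_generator :: "nat \<Rightarrow> int set \<Rightarrow> int \<Rightarrow> bool" where
  "m_generator m \<Delta> a \<longleftrightarrow> a \<in> \<Delta> \<and> a - int m \<notin> \<Delta>"

end

theory Submission
  imports Defs
begin

lemma semimodule_add_multiple_n:
  assumes "semimodule m n \<Delta>" and "d \<in> \<Delta>"
  shows "d + int (c * n) \<in> \<Delta>"
proof -
  have "int (0 * m + c * n) \<in> Gamma m n"
    unfolding Gamma_def by blast
  then show ?thesis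
    using assms unfolding semimodule_def by force
qed

lemma semimodule_sub_m_imp_sub_multiple_n:
  assumes "semimodule m n \<Delta>" and "m = k * n + 1" and "\<alpha> \<le> k"
    and "x - int m \<in> \<Delta>"
  shows "x - int \<alpha> * int n - 1 \<in> \<Delta>"
proof -
  have "x - int m + int ((k - \<alpha>) * n) \<in> \<Delta>"
    by (rule semimodule_add_multiple_n[OF assms(1,4)])
  moreover have "x - int m + int ((k - \<alpha>) * n) = x - int \<alpha> * int n - 1"
    using assms(2,3) by (simp add: of_nat_diff algebra_simps)
  ultimately show ?thesis
    by metis
qed

theorem mainTheorem15:
  fixes n k m :: nat and \<Delta> :: "int set" and x :: int and \<alpha> :: nat
  assumes "0 < n" and "0 < k" and "m = k * n + 1"
    and "semimodule m n \<Delta>"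
    and "x \<in> \<Delta>" and "\<alpha> \<le> k" and "x - int \<alpha> * int n - 1 \<notin> \<Delta>"
  shows "m_generator m \<Delta> x"
proof -
  have "x - int m \<notin> \<Delta>"
    using semimodule_sub_m_imp_sub_multiple_n assms(3,4,6,7) by blast
  then show ?thesis
    using assms(5) unfolding m_generator_def by simp
qed

end
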